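(* Let $\Omega=(a,b)$, let $S_h$ be a finite-dimensional subspace of $L^2(\Omega)$ and $\mathbf L_h:S_h\to S_h$ a linear operator that is self-adjoint and positive definite with respect to the $L^2(\Omega)$ inner product. Let $0<\gamma<1$, $K_\gamma>0$, $t>0$, $\sigma>0$, $\tau_1>0$, $N_1$ a positive integer and $\beta\in\mathbb R$. Set $z(p)=\sigma(ip+1)^2$ for $p\in\mathbb R$, $p_k=k\tau_1$, $z_k=z(p_k)$, $z_k'=z'(p_k)$, and for $v\in S_h$ define $$\Pi_{N_1}^{\gamma,\beta}v=\frac{t^{\beta-1}\tau_1}{2\pi i}\sum_{k=-N_1}^{N_1}z_k'e^{z_k}z_k^{\gamma-\beta}\left(z_k^{\gamma}\mathbf I+K_\gamma t^\gamma\mathbf L_h\right)^{-1}v,$$ with principal branches of the powers. If $\beta\ge\frac12$ and $\tau_1\le1$, then $$\left\|\Pi_{N_1}^{\gamma,\beta}v\right\|_{L^2(\Omega)}\lesssim\frac{t^{\beta-1}}{2\pi}e^{\sigma}\sigma^{-\beta+1}\|v\|_{L^2(\Omega)}\quad\text{for all }v\in S_h,$$ where the implicit constant is independent of $v$, $t$, $N_1$ and $\tau_1$.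
   Context: $A\lesssim B$ means $A\le CB$ for a constant $C$ not depending on the quantities indicated. *)

theory Defs
  imports "HOL-Analysis.Analysis"
begin

text \<open>The finite-dimensional subspace S_h of L^2(a,b), with the L^2 inner product,
  is represented through an L^2-orthonormal basis, i.e. as complex^'n with the
  standard Hermitian inner product (whose induced norm is the library norm on vectors).
  The operator L_h is then a matrix.\<close>

definition cinner_vec :: "complex^'n \<Rightarrow> complex^'n \<Rightarrow> complex" where
  "cinner_vec x y = (\<Sum>i\<in>UNIV. cnj (x$i) * y$i)"

definition self_adjoint_mat :: "complex^'n^'n \<Rightarrow> bool" where
  "self_adjoint_mat A \<longleftrightarrow> (\<forall>x y. cinner_vec x (A *v y) = cinner_vec (A *v x) y)"

definition pos_def_mat :: "complex^'n^'n \<Rightarrow> bool" where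
  "pos_def_mat A \<longleftrightarrow> (\<forall>x. x \<noteq> 0 \<longrightarrow> Re (cinner_vec x (A *v x)) > 0)"

definition zc :: "real \<Rightarrow> real \<Rightarrow> complex" where
  "zc \<sigma> p = of_real \<sigma> * (\<i> * of_real p + 1)^2"

text \<open>The quadrature operator Pi_{N1}^{gamma,beta}; powers are principal branches (powr = exp(w Ln z)).\<close>
definition Pi_op :: "real \<Rightarrow> real \<Rightarrow> complex^'n^'n \<Rightarrow> real \<Rightarrow> real \<Rightarrow> real \<Rightarrow> nat \<Rightarrow> real
    \<Rightarrow> complex^'n \<Rightarrow> complex^'n" where
  "Pi_op \<gamma> K L t \<sigma> \<tau>1 N1 \<beta> v =
     (of_real (t powr (\<beta> - 1) * \<tau>1) / (2 * of_real pi * \<i>)) *s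
     (\<Sum>k\<in>{-int N1..int N1}.
        (let p = real_of_int k * \<tau>1; z = zc \<sigma> p; z' = vector_derivative (zc \<sigma>) (at p)
         in (z' * exp z * z powr (of_real (\<gamma> - \<beta>))) *s
            (matrix_inv (mat (z powr of_real \<gamma>) + (K * t powr \<gamma>) *\<^sub>R L) *v v)))"

end

theory Submission
  imports Defs
begin

text \<open>
  Testing \<open>(w I + c L) x\<close> against \<open>x\<close>,
  with \<open>L\<close> self-adjoint and positive, gives \<open>|x|^2 (w + s)\<close> for some \<open>s \<ge> 0\<close>; for \<open>w = z^\<gamma>\<close>
  the argument of \<open>w\<close> lies in \<open>[-\<gamma>\<pi>, \<gamma>\<pi>]\<close>, so \<open>|w + s| \<ge> sin(\<gamma>\<pi>) |w|\<close> and the resolvent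
  has norm at most \<open>1 / (sin(\<gamma>\<pi>) |z|^\<gamma>)\<close>. On the contour \<open>|z| = \<sigma>(1 + p^2)\<close>,
  \<open>Re z = \<sigma>(1 - p^2)\<close> and \<open>|z'| = 2\<sigma> sqrt(1 + p^2)\<close>, so for \<open>\<beta> \<ge> 1/2\<close> the \<open>k\<close>-th term is at
  most \<open>2 e^\<sigma> \<sigma>^(1-\<beta>) |v| / (sin(\<gamma>\<pi>) (1 + \<sigma> p_k^2))\<close>. Finally
  \<open>\<tau> \<Sum>_k 1/(1 + \<sigma> (k\<tau>)^2) \<le> 1 + 4/sqrt \<sigma>\<close> uniformly in \<open>N\<close> and \<open>\<tau> \<le> 1\<close>, by comparing each
  summand with a telescoping difference.
\<close>

lemma cinner_vec_self: "cinner_vec x x = of_real ((norm x)\<^sup>2)"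
proof -
  have "cinner_vec x x = of_real (\<Sum>i\<in>UNIV. (cmod (x$i))\<^sup>2)"
    unfolding cinner_vec_def by (simp add: complex_norm_square[symmetric] mult.commute)
  also have "(\<Sum>i\<in>UNIV. (cmod (x$i))\<^sup>2) = (norm x)\<^sup>2"
    by (simp add: norm_vec_def L2_set_def sum_nonneg)
  finally show ?thesis .
qed

lemma norm_cinner_vec_le: "cmod (cinner_vec x y) \<le> norm x * norm y"
proof -
  have "cmod (cinner_vec x y) \<le> (\<Sum>i\<in>UNIV. cmod (cnj (x$i) * y$i))"
    unfolding cinner_vec_def by (rule norm_sum)
  also have "\<dots> = (\<Sum>i\<in>UNIV. \<bar>cmod (x$i)\<bar> * \<bar>cmod (y$i)\<bar>)"
    by (simp add: norm_mult)
  also have "\<dots> \<le> L2_set (\<lambda>i. cmod (x$i)) UNIV * L2_set (\<lambda>i. cmod (y$i)) UNIV"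
    by (rule L2_set_mult_ineq)
  finally show ?thesis by (simp add: norm_vec_def)
qed

lemma cinner_vec_commute: "cinner_vec y x = cnj (cinner_vec x y)"
  unfolding cinner_vec_def by (simp add: mult.commute)

lemma cinner_vec_add_smult_right:
  "cinner_vec x (w *s y + c *\<^sub>R z) = w * cinner_vec x y + of_real c * cinner_vec x z"
  unfolding cinner_vec_def
  by (simp add: scaleR_conv_of_real[where 'a=complex] sum.distrib sum_distrib_left algebra_simps)

lemma norm_vector_smult: "norm (c *s x) = norm c * norm (x :: 'a::real_normed_div_algebra ^ 'n)"
  by (simp add: norm_vec_def norm_mult L2_set_right_distrib)

lemma mat_add_scaleR_mult:
  "(mat w + c *\<^sub>R L) *v x = w *s x + c *\<^sub>R (L *v (x::complex^'n))"
proof -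
  have "mat w *v x = w *s x"
    by (simp add: vec_eq_iff matrix_vector_mult_def mat_def if_distrib[of "\<lambda>a. a * _"] cong: if_cong)
  moreover have "(c *\<^sub>R L) *v x = c *\<^sub>R (L *v x)"
    by (simp add: vec_eq_iff matrix_vector_mult_def scaleR_conv_of_real[where 'a=complex]
        sum_distrib_left mult.assoc)
  ultimately show ?thesis by (simp add: matrix_vector_mult_add_rdistrib)
qed

lemma cinner_vec_self_adjoint_nonneg:
  assumes "self_adjoint_mat L" "pos_def_mat L"
  obtains r where "r \<ge> 0" "cinner_vec x (L *v x) = of_real r"
proof -
  have "cinner_vec x (L *v x) = cnj (cinner_vec x (L *v x))"
    using assms(1) unfolding self_adjoint_mat_def by (metis cinner_vec_commute)
  then have "Im (cinner_vec x (L *v x)) = 0" by (metis cnj.sel(2) neg_equal_zero)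
  moreover have "Re (cinner_vec x (L *v x)) \<ge> 0"
    using assms(2) unfolding pos_def_mat_def
    by (cases "x = 0") (auto simp: cinner_vec_def less_imp_le)
  ultimately show ?thesis
    by (intro that[of "Re (cinner_vec x (L *v x))"]) (simp_all add: complex_eq_iff)
qed

lemma matrix_vector_mult_matrix_inv_cancel:
  fixes M :: "'a::field^'n^'n"
  assumes "\<And>x. M *v x = 0 \<Longrightarrow> x = 0"
  shows "M *v (matrix_inv M *v v) = v"
proof -
  have "invertible M"
    using assms by (simp add: invertible_left_inverse matrix_left_invertible_ker)
  then have "M ** matrix_inv M = mat 1"
    unfolding invertible_def matrix_inv_def by (rule someI2_ex) auto
  then show ?thesis by (simp add: matrix_vector_mul_assoc)
qed

lemma norm_matrix_inv_mult_le:
  fixes M :: "'a::real_normed_field^'n^'n"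
  assumes m: "m > 0" and lower: "\<And>x. m * norm x \<le> norm (M *v x)"
  shows "m * norm (matrix_inv M *v v) \<le> norm v"
proof -
  have "M *v x = 0 \<Longrightarrow> x = 0" for x
    using lower[of x] m by (simp add: mult_le_0_iff)
  then show ?thesis
    using lower[of "matrix_inv M *v v"] by (simp add: matrix_vector_mult_matrix_inv_cancel)
qed

lemma sin_mult_norm_exp_le_norm_exp_add:
  assumes phi: "\<bar>Im u\<bar> \<le> \<theta>" and "\<theta> < pi" and "s \<ge> 0"
  shows "sin \<theta> * norm (exp u) \<le> norm (exp u + of_real s)"
proof -
  define R where "R = exp (Re u)"
  define \<phi> where "\<phi> = Im u"
  have R: "R > 0" and nR: "norm (exp u) = R" by (simp_all add: R_def)
  have Re: "Re (exp u + of_real s) = R * cos \<phi> + s" and Im: "Im (exp u + of_real s) = R * sin \<phi>"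
    by (simp_all add: Re_exp Im_exp R_def \<phi>_def)
  show ?thesis
  proof (cases "\<bar>\<phi>\<bar> \<le> pi/2")
    case True
    then have "R * cos \<phi> \<ge> 0" using R by (intro mult_nonneg_nonneg cos_ge_zero) auto
    have "R\<^sup>2 = (R * cos \<phi>)\<^sup>2 + (R * sin \<phi>)\<^sup>2"
      by (simp add: power_mult_distrib distrib_left[symmetric])
    also have "\<dots> \<le> (R * cos \<phi> + s)\<^sup>2 + (R * sin \<phi>)\<^sup>2"
      using \<open>R * cos \<phi> \<ge> 0\<close> \<open>s \<ge> 0\<close> by (intro add_right_mono power_mono) auto
    also have "\<dots> = (norm (exp u + of_real s))\<^sup>2"
      unfolding cmod_power2 Re Im ..
    finally have "R \<le> norm (exp u + of_real s)" by (rule power2_le_imp_le) simp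
    then show ?thesis using R nR by (smt (verit) mult_le_cancel_right2 sin_le_one)
  next
    case False
    have "sin \<theta> = sin (pi - \<theta>)" by simp
    also have "\<dots> \<le> sin (pi - \<bar>\<phi>\<bar>)"
      by (intro sin_monotone_2pi_le) (use False phi \<open>\<theta> < pi\<close> in \<open>auto simp: \<phi>_def\<close>)
    also have "\<dots> = \<bar>sin \<phi>\<bar>"
      using sin_ge_zero[of "\<bar>\<phi>\<bar>"] phi \<open>\<theta> < pi\<close> by (auto simp: \<phi>_def abs_if)
    finally have "sin \<theta> * R \<le> \<bar>Im (exp u + of_real s)\<bar>"
      unfolding Im using R by (simp add: abs_mult mult.commute)
    then show ?thesis using abs_Im_le_cmod nR by (metis order_trans)
  qed
qed

lemma sin_mult_norm_powr_le_norm_powr_add: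
  fixes z :: complex
  assumes "z \<noteq> 0" and "0 < \<gamma>" "\<gamma> < 1" and "s \<ge> 0"
  shows "sin (\<gamma> * pi) * norm (z powr of_real \<gamma>) \<le> norm (z powr of_real \<gamma> + of_real s)"
proof -
  have "\<bar>Im (Ln z)\<bar> \<le> pi"
    using mpi_less_Im_Ln[OF assms(1)] Im_Ln_le_pi[OF assms(1)] by linarith
  then have "\<bar>Im (of_real \<gamma> * Ln z)\<bar> \<le> \<gamma> * pi"
    using assms(2) by (simp add: abs_mult mult_left_mono)
  then have "sin (\<gamma> * pi) * norm (exp (of_real \<gamma> * Ln z))
      \<le> norm (exp (of_real \<gamma> * Ln z) + of_real s)"
    by (rule sin_mult_norm_exp_le_norm_exp_add) (use assms in auto)
  then show ?thesis using assms(1) by (simp only: powr_def if_False)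
qed

lemma norm_mat_add_scaleR_mult_ge:
  fixes L :: "complex^'n^'n"
  assumes "self_adjoint_mat L" "pos_def_mat L" and "c > 0"
    and sector: "\<And>s. s \<ge> 0 \<Longrightarrow> \<delta> * norm w \<le> norm (w + of_real s)"
  shows "\<delta> * norm w * norm x \<le> norm ((mat w + c *\<^sub>R L) *v x)"
proof (cases "x = 0")
  case False
  then have nx: "norm x > 0" by simp
  obtain r where r: "r \<ge> 0" "cinner_vec x (L *v x) = of_real r"
    using cinner_vec_self_adjoint_nonneg assms(1,2) by blast
  define s where "s = c * r / (norm x)\<^sup>2"
  have "s \<ge> 0" using r \<open>c > 0\<close> by (simp add: s_def)
  have "cinner_vec x ((mat w + c *\<^sub>R L) *v x) = of_real ((norm x)\<^sup>2) * (w + of_real s)"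
    using nx by (simp add: mat_add_scaleR_mult cinner_vec_add_smult_right cinner_vec_self r s_def
        field_simps)
  then have "(norm x)\<^sup>2 * norm (w + of_real s) \<le> norm x * norm ((mat w + c *\<^sub>R L) *v x)"
    using norm_cinner_vec_le by (metis norm_mult norm_of_real abs_power2)
  then have "norm (w + of_real s) * norm x \<le> norm ((mat w + c *\<^sub>R L) *v x)"
    using nx by (simp add: power2_eq_square mult_ac)
  moreover have "\<delta> * norm w * norm x \<le> norm (w + of_real s) * norm x"
    using sector[OF \<open>s \<ge> 0\<close>] by (simp add: mult_right_mono)
  ultimately show ?thesis by linarith
qed simp

lemma norm_resolvent_powr_le:
  fixes L :: "complex^'n^'n" and z :: complex
  assumes "self_adjoint_mat L" "pos_def_mat L" and "c > 0"
    and "z \<noteq> 0" and "0 < \<gamma>" "\<gamma> < 1"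
  shows "sin (\<gamma> * pi) * norm (z powr of_real \<gamma>)
           * norm (matrix_inv (mat (z powr of_real \<gamma>) + c *\<^sub>R L) *v v) \<le> norm v"
proof (rule norm_matrix_inv_mult_le)
  show "sin (\<gamma> * pi) * norm (z powr of_real \<gamma>) > 0"
    using assms(4-6) by (simp add: sin_gt_zero)
  show "sin (\<gamma> * pi) * norm (z powr of_real \<gamma>) * norm x
          \<le> norm ((mat (z powr of_real \<gamma>) + c *\<^sub>R L) *v x)" for x
    using norm_mat_add_scaleR_mult_ge sin_mult_norm_powr_le_norm_powr_add assms by blast
qed

lemma norm_zc: "norm (zc \<sigma> p) = \<bar>\<sigma>\<bar> * (1 + p\<^sup>2)"
proof -
  have "norm (zc \<sigma> p) = sqrt ((\<sigma> * (1 + p\<^sup>2))\<^sup>2)"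
    by (simp add: zc_def cmod_def power2_eq_square algebra_simps)
  then show ?thesis by (simp add: abs_mult)
qed

lemma Re_zc: "Re (zc \<sigma> p) = \<sigma> * (1 - p\<^sup>2)"
  by (simp add: zc_def power2_eq_square algebra_simps)

lemma vector_derivative_zc:
  "vector_derivative (zc \<sigma>) (at p) = 2 * of_real \<sigma> * \<i> * (\<i> * of_real p + 1)"
proof -
  have "((\<lambda>x. of_real \<sigma> * (\<i> * of_real x + 1)\<^sup>2) has_vector_derivative
          (2 * of_real \<sigma> * \<i> * (\<i> * of_real p + 1))) (at p)"
    by (rule has_vector_derivative_real_field) (auto intro!: derivative_eq_intros)
  then show ?thesis unfolding zc_def[abs_def] by (rule vector_derivative_at)
qed

lemma norm_vector_derivative_zc:
  "norm (vector_derivative (zc \<sigma>) (at p)) = 2 * \<bar>\<sigma>\<bar> * sqrt (1 + p\<^sup>2)"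
proof -
  have "norm (vector_derivative (zc \<sigma>) (at p)) = sqrt ((2 * \<sigma>)\<^sup>2 * (1 + p\<^sup>2))"
    by (simp add: vector_derivative_zc cmod_def power2_eq_square algebra_simps)
  then show ?thesis by (simp add: real_sqrt_mult)
qed

lemma contour_weight_le:
  assumes "\<sigma> > 0" and "\<beta> \<ge> 1/2"
  shows "norm (vector_derivative (zc \<sigma>) (at p)) * exp (Re (zc \<sigma> p)) * norm (zc \<sigma> p) powr (- \<beta>)
           \<le> 2 * exp \<sigma> * \<sigma> powr (1 - \<beta>) / (1 + \<sigma> * p\<^sup>2)"
proof -
  define q where "q = 1 + p\<^sup>2"
  have "q \<ge> 1" by (simp add: q_def)
  have "sqrt q * q powr (- \<beta>) = q powr (1/2 - \<beta>)"
    using \<open>q \<ge> 1\<close> by (simp add: powr_half_sqrt[symmetric] powr_add[symmetric])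
  also have "\<dots> \<le> 1"
    using powr_mono[of "1/2 - \<beta>" 0 q] \<open>q \<ge> 1\<close> \<open>\<beta> \<ge> 1/2\<close> by simp
  finally have root: "sqrt q * q powr (- \<beta>) \<le> 1" .
  have decay: "exp (- (\<sigma> * p\<^sup>2)) \<le> 1 / (1 + \<sigma> * p\<^sup>2)"
    using exp_ge_add_one_self[of "\<sigma> * p\<^sup>2"] \<open>\<sigma> > 0\<close>
    by (simp add: exp_minus field_simps add_pos_nonneg)
  have "norm (vector_derivative (zc \<sigma>) (at p)) * exp (Re (zc \<sigma> p)) * norm (zc \<sigma> p) powr (- \<beta>)
      = 2 * exp \<sigma> * \<sigma> powr (1 - \<beta>) * (sqrt q * q powr (- \<beta>)) * exp (- (\<sigma> * p\<^sup>2))"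
    using \<open>\<sigma> > 0\<close> \<open>q \<ge> 1\<close>
    by (simp add: norm_vector_derivative_zc Re_zc norm_zc q_def[symmetric] powr_mult powr_diff
        powr_minus_divide exp_diff exp_minus_inverse right_diff_distrib field_simps)
  also have "\<dots> \<le> 2 * exp \<sigma> * \<sigma> powr (1 - \<beta>) * 1 * (1 / (1 + \<sigma> * p\<^sup>2))"
    using root decay by (intro mult_mono mult_left_mono) auto
  finally show ?thesis by simp
qed

lemma norm_quadrature_term_le:
  fixes L :: "complex^'n^'n"
  assumes "self_adjoint_mat L" "pos_def_mat L" and "c > 0"
    and "0 < \<gamma>" "\<gamma> < 1" and "\<sigma> > 0" and "\<beta> \<ge> 1/2"
  shows "norm ((vector_derivative (zc \<sigma>) (at p) * exp (zc \<sigma> p) * zc \<sigma> p powr of_real (\<gamma> - \<beta>)) *s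
            (matrix_inv (mat (zc \<sigma> p powr of_real \<gamma>) + c *\<^sub>R L) *v v))
         \<le> 2 / sin (\<gamma> * pi) * exp \<sigma> * \<sigma> powr (1 - \<beta>) * norm v / (1 + \<sigma> * p\<^sup>2)"
proof -
  define z where "z = zc \<sigma> p"
  define W where "W = norm (vector_derivative (zc \<sigma>) (at p)) * exp (Re z) * norm z powr (- \<beta>)"
  have "norm z > 0" using \<open>\<sigma> > 0\<close> by (simp add: z_def norm_zc add_pos_nonneg)
  then have "z \<noteq> 0" by auto
  have "sin (\<gamma> * pi) > 0" using assms(4,5) by (simp add: sin_gt_zero)
  have coeff: "norm (vector_derivative (zc \<sigma>) (at p) * exp z * z powr of_real (\<gamma> - \<beta>))
      = W * norm (z powr of_real \<gamma>)"
  proof -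
    have "norm (z powr of_real (\<gamma> - \<beta>)) = norm z powr (- \<beta>) * norm (z powr of_real \<gamma>)"
      by (simp add: norm_powr_real_powr' powr_add[symmetric])
    then show ?thesis by (simp add: W_def norm_mult mult_ac)
  qed
  have "norm ((vector_derivative (zc \<sigma>) (at p) * exp z * z powr of_real (\<gamma> - \<beta>)) *s
            (matrix_inv (mat (z powr of_real \<gamma>) + c *\<^sub>R L) *v v))
      = W / sin (\<gamma> * pi) * (sin (\<gamma> * pi) * norm (z powr of_real \<gamma>)
          * norm (matrix_inv (mat (z powr of_real \<gamma>) + c *\<^sub>R L) *v v))"
    unfolding norm_vector_smult coeff using \<open>sin (\<gamma> * pi) > 0\<close> by simp
  also have "\<dots> \<le> W / sin (\<gamma> * pi) * norm v"
    using norm_resolvent_powr_le[OF assms(1-3) \<open>z \<noteq> 0\<close> assms(4,5)] \<open>sin (\<gamma> * pi) > 0\<close>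
    by (intro mult_left_mono) (auto simp: W_def)
  also have "\<dots> \<le> 2 * exp \<sigma> * \<sigma> powr (1 - \<beta>) / (1 + \<sigma> * p\<^sup>2) / sin (\<gamma> * pi) * norm v"
    using contour_weight_le[OF assms(6,7), of p] \<open>sin (\<gamma> * pi) > 0\<close>
    by (intro mult_right_mono divide_right_mono) (auto simp: W_def z_def)
  finally show ?thesis by (simp add: z_def mult.commute)
qed

lemma inverse_one_plus_sq_le_telescoping:
  fixes a n :: real
  assumes "a > 0" "n \<ge> 0"
  shows "a / (1 + (a * (n + 1))\<^sup>2) \<le> 2 / (1 + a * n) - 2 / (1 + a * (n + 1))"
proof -
  have pos: "1 + a * n > 0" "1 + a * (n + 1) > 0" using assms by (simp_all add: add_pos_nonneg)
  have "(1 + a * n) * (1 + a * (n + 1)) \<le> (1 + a * (n + 1))\<^sup>2"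
    using assms pos by (simp add: power2_eq_square mult_right_mono)
  also have "\<dots> \<le> 2 * (1 + (a * (n + 1))\<^sup>2)"
    using zero_le_power2[of "1 - a * (n + 1)"] by (simp add: power2_eq_square algebra_simps)
  finally have "a / (1 + (a * (n + 1))\<^sup>2) \<le> 2 * a / ((1 + a * n) * (1 + a * (n + 1)))"
    using assms pos by (simp add: divide_simps add_pos_nonneg)
  also have "\<dots> = 2 / (1 + a * n) - 2 / (1 + a * (n + 1))"
    using pos by (simp add: field_simps)
  finally show ?thesis .
qed

lemma sum_inverse_one_plus_sq_le:
  fixes a :: real
  assumes "a > 0"
  shows "a * (\<Sum>k\<in>{-int N..int N}. 1 / (1 + (a * of_int k)\<^sup>2)) \<le> a + 4"
proof -
  define f where "f k = 1 / (1 + (a * of_int k)\<^sup>2)" for k :: int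
  have "a * sum f {-int N..int N} \<le> a + 4 - 4 / (1 + a * N)"
  proof (induction N)
    case (Suc N)
    have "{-int (Suc N)..int (Suc N)} = insert (- int N - 1) (insert (int N + 1) {-int N..int N})"
      by auto
    then have "a * sum f {-int (Suc N)..int (Suc N)}
        = 2 * (a / (1 + (a * (real N + 1))\<^sup>2)) + a * sum f {-int N..int N}"
      by (simp add: f_def power2_eq_square algebra_simps)
    moreover have "4 / (1 + a * x) = 2 * (2 / (1 + a * x))" for x :: real by simp
    ultimately show ?case
      using Suc.IH inverse_one_plus_sq_le_telescoping[OF assms, of "real N"]
      by (simp add: add.commute)
  qed (simp add: f_def)
  moreover have "4 / (1 + a * N) \<ge> 0" using assms by simp
  ultimately show ?thesis unfolding f_def by linarith
qed

lemma scaled_sum_inverse_one_plus_sq_le: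
  fixes \<sigma> \<tau> :: real
  assumes "\<sigma> > 0" and "\<tau> > 0" "\<tau> \<le> 1"
  shows "\<tau> * (\<Sum>k\<in>{-int N..int N}. 1 / (1 + \<sigma> * (of_int k * \<tau>)\<^sup>2)) \<le> 1 + 4 / sqrt \<sigma>"
proof -
  define a where "a = sqrt \<sigma> * \<tau>"
  have "a > 0" using assms by (simp add: a_def)
  have "\<tau> * (\<Sum>k\<in>{-int N..int N}. 1 / (1 + \<sigma> * (of_int k * \<tau>)\<^sup>2))
      = a * (\<Sum>k\<in>{-int N..int N}. 1 / (1 + (a * of_int k)\<^sup>2)) / sqrt \<sigma>"
    using assms by (simp add: a_def power_mult_distrib mult_ac)
  also have "\<dots> \<le> (a + 4) / sqrt \<sigma>"
    using sum_inverse_one_plus_sq_le[OF \<open>a > 0\<close>] assms by (simp add: divide_right_mono)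
  also have "\<dots> \<le> 1 + 4 / sqrt \<sigma>"
    using assms by (simp add: a_def add_divide_distrib)
  finally show ?thesis .
qed

lemma norm_Pi_op_le:
  fixes L :: "complex^'n^'n"
  assumes "self_adjoint_mat L" "pos_def_mat L" and "0 < \<gamma>" "\<gamma> < 1" and "K > 0"
    and "\<sigma> > 0" and "\<beta> \<ge> 1/2" and "t > 0" and "\<tau> > 0"
  shows "norm (Pi_op \<gamma> K L t \<sigma> \<tau> N \<beta> v)
           \<le> t powr (\<beta> - 1) / (2 * pi) * (2 / sin (\<gamma> * pi) * exp \<sigma> * \<sigma> powr (1 - \<beta>) * norm v)
              * (\<tau> * (\<Sum>k\<in>{-int N..int N}. 1 / (1 + \<sigma> * (of_int k * \<tau>)\<^sup>2)))"
proof -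
  define B where "B = 2 / sin (\<gamma> * pi) * exp \<sigma> * \<sigma> powr (1 - \<beta>) * norm v"
  define S where "S = (\<Sum>k\<in>{-int N..int N}.
        (let p = real_of_int k * \<tau>; z = zc \<sigma> p; z' = vector_derivative (zc \<sigma>) (at p)
         in (z' * exp z * z powr (of_real (\<gamma> - \<beta>))) *s
            (matrix_inv (mat (z powr of_real \<gamma>) + (K * t powr \<gamma>) *\<^sub>R L) *v v)))"
  have "K * t powr \<gamma> > 0" using \<open>K > 0\<close> \<open>t > 0\<close> by simp
  then have "norm S \<le> (\<Sum>k\<in>{-int N..int N}. B * (1 / (1 + \<sigma> * (of_int k * \<tau>)\<^sup>2)))"
    unfolding S_def Let_def B_def
    using norm_quadrature_term_le[OF assms(1,2) _ assms(3,4,6,7)]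
    by (intro order_trans[OF norm_sum sum_mono]) simp
  also have "\<dots> = B * (\<Sum>k\<in>{-int N..int N}. 1 / (1 + \<sigma> * (of_int k * \<tau>)\<^sup>2))"
    by (rule sum_distrib_left[symmetric])
  finally have "\<tau> * norm S \<le> B * (\<tau> * (\<Sum>k\<in>{-int N..int N}. 1 / (1 + \<sigma> * (of_int k * \<tau>)\<^sup>2)))"
    using \<open>\<tau> > 0\<close> by (simp add: mult.left_commute)
  then have "t powr (\<beta> - 1) / (2 * pi) * (\<tau> * norm S)
      \<le> t powr (\<beta> - 1) / (2 * pi) * (B * (\<tau> * (\<Sum>k\<in>{-int N..int N}. 1 / (1 + \<sigma> * (of_int k * \<tau>)\<^sup>2))))"
    by (rule mult_left_mono) simp
  moreover have "norm (Pi_op \<gamma> K L t \<sigma> \<tau> N \<beta> v) = t powr (\<beta> - 1) / (2 * pi) * (\<tau> * norm S)"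
    using \<open>t > 0\<close> \<open>\<tau> > 0\<close> by (simp add: Pi_op_def S_def norm_vector_smult norm_divide norm_mult)
  ultimately show ?thesis by (simp only: B_def mult.assoc)
qed

theorem lemma8:
  fixes L :: "complex^'n^'n" and \<gamma> K \<sigma> \<beta> :: real
  assumes "self_adjoint_mat L" and "pos_def_mat L"
    and "0 < \<gamma>" and "\<gamma> < 1" and "K > 0" and "\<sigma> > 0" and "\<beta> \<ge> 1/2"
  shows "\<exists>C. \<forall>t \<tau>1 (N1::nat) (v::complex^'n).
           t > 0 \<longrightarrow> \<tau>1 > 0 \<longrightarrow> \<tau>1 \<le> 1 \<longrightarrow> N1 \<ge> 1 \<longrightarrow>
           norm (Pi_op \<gamma> K L t \<sigma> \<tau>1 N1 \<beta> v)
             \<le> C * (t powr (\<beta> - 1) / (2 * pi) * exp \<sigma> * \<sigma> powr (1 - \<beta>) * norm v)"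
proof (intro exI allI impI)
  fix t \<tau>1 :: real and N1 :: nat and v :: "complex^'n"
  assume "t > 0" and \<tau>1: "\<tau>1 > 0" "\<tau>1 \<le> 1" and "N1 \<ge> 1"
  define A where "A = t powr (\<beta> - 1) / (2 * pi) * (2 / sin (\<gamma> * pi) * exp \<sigma> * \<sigma> powr (1 - \<beta>) * norm v)"
  have "A \<ge> 0" using assms(3,4) by (simp add: A_def sin_ge_zero)
  have "norm (Pi_op \<gamma> K L t \<sigma> \<tau>1 N1 \<beta> v)
      \<le> A * (\<tau>1 * (\<Sum>k\<in>{-int N1..int N1}. 1 / (1 + \<sigma> * (of_int k * \<tau>1)\<^sup>2)))"
    unfolding A_def using norm_Pi_op_le[OF assms \<open>t > 0\<close> \<open>\<tau>1 > 0\<close>] .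
  also have "\<dots> \<le> A * (1 + 4 / sqrt \<sigma>)"
    using scaled_sum_inverse_one_plus_sq_le[OF \<open>\<sigma> > 0\<close> \<tau>1] \<open>A \<ge> 0\<close> by (rule mult_left_mono)
  also have "\<dots> = (2 / sin (\<gamma> * pi) * (1 + 4 / sqrt \<sigma>))
          * (t powr (\<beta> - 1) / (2 * pi) * exp \<sigma> * \<sigma> powr (1 - \<beta>) * norm v)"
    by (simp only: A_def divide_inverse mult_ac)
  finally show "norm (Pi_op \<gamma> K L t \<sigma> \<tau>1 N1 \<beta> v)
      \<le> (2 / sin (\<gamma> * pi) * (1 + 4 / sqrt \<sigma>))
          * (t powr (\<beta> - 1) / (2 * pi) * exp \<sigma> * \<sigma> powr (1 - \<beta>) * norm v)" .
qed

end
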